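(* Let $0<q<1$, $m\in\{0,1,2,\dots\}$, $\lambda\in\left]0,q^m(1-q)^{-1}\right[$, and let $\mathcal{G}_X(t)=\sum_{j\ge0}t^jp_j(\lambda;q,m)$ be the probability generating function of $X\sim\mathscr{P}(\lambda;q,m)$ (defined in the context). Then: (1) for $m=0$, $\mathcal{G}_X(t)=\dfrac{((1-q)\lambda;q)_\infty}{((1-q)\lambda t;q)_\infty}$ for real $|t|\le1$; (2) for $m\neq0$ and fixed $\lambda>0$ and real $t$ with $0<|t|\le 1$, \[ \lim_{q\to1^-}\mathcal{G}_X(t)=t^m\exp\big(\lambda(t-1)\big)\,L_m^{(0)}\!\left(\lambda\left(2-\left(t+\tfrac1t\right)\right)\right), \] where $L_m^{(0)}(x)=\sum_{k=0}^m\binom{m}{k}\frac{(-x)^k}{k!}$ is the Laguerre polynomial.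
   Context: For $a\in\mathbb{C}$: $(a;q)_0=1$, $(a;q)_n=\prod_{k=0}^{n-1}(1-aq^k)$, $(a;q)_\infty=\prod_{k\ge0}(1-aq^k)$. The Wall polynomial is $P_n(x;a|q)=\sum_{k=0}^n\frac{(q^{-n};q)_k}{(aq;q)_k}\frac{(qx)^k}{(q;q)_k}$. Write $m\wedge j=\min(m,j)$, $m\vee j=\max(m,j)$, $\binom{n}{2}=n(n-1)/2$. For $0<\lambda<q^m/(1-q)$ set $\mathcal{N}_{q,m}(\lambda)=\frac{(q^{1-m}(1-q)\lambda;q)_m}{q^m\,(q^{-m}(1-q)\lambda;q)_\infty}$ and \[ p_j(\lambda;q,m)=\frac{q^{2\binom{m\wedge j}{2}}(1-q)^{|m-j|}\lambda^{|m-j|}}{\mathcal{N}_{q,m}(\lambda)\,q^{mj}(q;q)_j(q;q)_m}\left(\frac{(q;q)_{m\vee j}}{(q;q)_{|m-j|}}P_{m\wedge j}\big((1-q)\lambda;q^{|m-j|}\,|\,q\big)\right)^2,\quad j=0,1,2,\dots, \] the probability mass function of the generalized Euler distribution $\mathscr{P}(\lambda;q,m)$. Note that $\lambda<q^m/(1-q)$ holds for all $q$ close enough to $1$. *)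

theory Defs
  imports "HOL-Analysis.Analysis"
begin

definition qpoch :: "real \<Rightarrow> real \<Rightarrow> nat \<Rightarrow> real" where
  "qpoch a q n = (\<Prod>k<n. 1 - a * q ^ k)"

definition qpoch_inf :: "real \<Rightarrow> real \<Rightarrow> real" where
  "qpoch_inf a q = (\<Prod>k. 1 - a * q ^ k)"

definition wall :: "nat \<Rightarrow> real \<Rightarrow> real \<Rightarrow> real \<Rightarrow> real" where
  "wall n x a q = (\<Sum>k\<le>n. qpoch (inverse (q ^ n)) q k / qpoch (a * q) q k
                       * (q * x) ^ k / qpoch q q k)"

definition normN :: "real \<Rightarrow> nat \<Rightarrow> real \<Rightarrow> real" where
  "normN q m lam = qpoch ((q / q ^ m) * (1 - q) * lam) q m
      / (q ^ m * qpoch_inf (inverse (q ^ m) * (1 - q) * lam) q)"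

definition adiff :: "nat \<Rightarrow> nat \<Rightarrow> nat" where
  "adiff m j = max m j - min m j"

definition gen_euler_pmf :: "real \<Rightarrow> real \<Rightarrow> nat \<Rightarrow> nat \<Rightarrow> real" where
  "gen_euler_pmf lam q m j =
     q ^ (2 * (min m j choose 2)) * (1 - q) ^ adiff m j * lam ^ adiff m j
     / (normN q m lam * q ^ (m * j) * qpoch q q j * qpoch q q m)
     * (qpoch q q (max m j) / qpoch q q (adiff m j)
        * wall (min m j) ((1 - q) * lam) (q ^ adiff m j) q) ^ 2"

definition gen_euler_pgf :: "real \<Rightarrow> real \<Rightarrow> nat \<Rightarrow> real \<Rightarrow> real" where
  "gen_euler_pgf lam q m t = (\<Sum>j. t ^ j * gen_euler_pmf lam q m j)"

definition laguerre0 :: "nat \<Rightarrow> real \<Rightarrow> real" where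
  "laguerre0 m x = (\<Sum>k\<le>m. real (m choose k) * (- x) ^ k / fact k)"

end

theory Submission
  imports Defs
begin

(* For m = 0 the pmf is (x;q)_inf x^j / (q;q)_j with x = (1-q) lam, so the generating function is
   (x;q)_inf times Euler's q-exponential sum_j (xt)^j / (q;q)_j = 1 / (xt;q)_inf; the latter follows
   from the functional equation (1 - z) e_q(z) = e_q(qz).

   For m > 0, the powers of 1 - q in p_j cancel against those of the q-Pochhammer symbols, leaving
   N^(-1) times an expression in q-integers that is continuous at q = 1. Since
   log (a;q)_inf = -a/(1-q) + O(a^2/(1-q^2)), the factor N^(-1) tends to e^(-lam). At q = 1 the
   Wall polynomials become Laguerre polynomials L_m^(j-m)(lam), and Vandermonde's identity evaluates
   sum_j y^j L_m^(j-m)(lam)^2 / j! in closed form, which at y = lam t is the claimed Laguerre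
   expression. The limit may be taken termwise (Tannery's theorem): for q near 1, the factor
   lam^|m-j| / [|m-j|]_q! makes p_j decay geometrically in j, uniformly in q. *)

lemma qpoch_Suc: "qpoch a q (Suc n) = qpoch a q n * (1 - a * q ^ n)"
  by (simp add: qpoch_def)

lemma abs_mult_power_le:
  fixes a q :: real assumes "\<bar>q\<bar> \<le> 1" shows "\<bar>a * q ^ k\<bar> \<le> \<bar>a\<bar>"
  using assms by (simp add: abs_mult power_abs mult_left_le power_le_one)

lemma qpoch_factor_nonzero:
  fixes a q :: real assumes "\<bar>q\<bar> \<le> 1" "\<bar>a\<bar> < 1" shows "1 - a * q ^ k \<noteq> 0"
  using abs_mult_power_le[of q a k] assms by auto

lemma qpoch_nonzero:
  fixes a q :: real assumes "\<bar>q\<bar> \<le> 1" "\<bar>a\<bar> < 1" shows "qpoch a q n \<noteq> 0"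
  using qpoch_factor_nonzero[OF assms] by (simp add: qpoch_def)

lemma convergent_prod_qpoch_inf:
  fixes a q :: real assumes q: "\<bar>q\<bar> < 1" and a: "\<bar>a\<bar> < 1"
  shows "convergent_prod (\<lambda>k. 1 - a * q ^ k)"
proof -
  have "summable (\<lambda>k. \<bar>-(a * q ^ k)\<bar>)"
    using q by (auto simp: abs_mult power_abs intro!: summable_mult summable_geometric)
  moreover have "-(a * q ^ k) \<noteq> -1" for k
    using qpoch_factor_nonzero[of q a k] q a by auto
  ultimately show ?thesis
    using summable_imp_convergent_prod_real[of "\<lambda>k. -(a * q ^ k)"] by simp
qed

lemma qpoch_LIMSEQ_qpoch_inf:
  fixes a q :: real assumes "\<bar>q\<bar> < 1" "\<bar>a\<bar> < 1"
  shows "(\<lambda>n. qpoch a q n) \<longlonglongrightarrow> qpoch_inf a q"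
proof -
  have "(\<lambda>n. \<Prod>i\<le>n. 1 - a * q ^ i) \<longlonglongrightarrow> qpoch_inf a q"
    unfolding qpoch_inf_def by (rule convergent_prod_LIMSEQ[OF convergent_prod_qpoch_inf[OF assms]])
  then have "(\<lambda>n. qpoch a q (Suc n)) \<longlonglongrightarrow> qpoch_inf a q"
    by (simp add: qpoch_def lessThan_Suc_atMost)
  then show ?thesis by (rule LIMSEQ_imp_Suc)
qed

lemma qpoch_inf_nonzero:
  fixes a q :: real assumes "\<bar>q\<bar> < 1" "\<bar>a\<bar> < 1"
  shows "qpoch_inf a q \<noteq> 0"
  unfolding qpoch_inf_def
  using assms qpoch_factor_nonzero[of q a]
  by (intro prodinf_nonzero convergent_prod_qpoch_inf) auto

definition qexp :: "real \<Rightarrow> real \<Rightarrow> real" where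
  "qexp q z = (\<Sum>j. inverse (qpoch q q j) * z ^ j)"

lemma summable_qexp:
  fixes q z :: real assumes q: "\<bar>q\<bar> < 1" and z: "\<bar>z\<bar> < 1"
  shows "summable (\<lambda>j. inverse (qpoch q q j) * z ^ j)"
proof -
  have "(\<lambda>n. inverse (qpoch q q n)) \<longlonglongrightarrow> inverse (qpoch_inf q q)"
    using q by (intro tendsto_inverse qpoch_LIMSEQ_qpoch_inf qpoch_inf_nonzero) auto
  then have "Bseq (\<lambda>n. inverse (qpoch q q n))"
    by (intro convergent_imp_Bseq convergentI)
  then obtain C where C: "\<And>n. norm (inverse (qpoch q q n)) \<le> C"
    by (auto simp: Bseq_def)
  show ?thesis
  proof (rule summable_comparison_test'[where N = 0])
    show "summable (\<lambda>j. C * \<bar>z\<bar> ^ j)"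
      using z by (intro summable_mult summable_geometric) simp
    show "norm (inverse (qpoch q q j) * z ^ j) \<le> C * \<bar>z\<bar> ^ j" for j
      using C[of j] by (simp add: abs_mult power_abs mult_right_mono)
  qed
qed

lemma qexp_functional_eq:
  fixes q z :: real assumes q: "\<bar>q\<bar> < 1" and z: "\<bar>z\<bar> < 1"
  shows "(1 - z) * qexp q z = qexp q (q * z)"
proof -
  define c where "c j = inverse (qpoch q q j)" for j
  have qz: "\<bar>q * z\<bar> < 1"
    using abs_mult_power_le[of q z 1] q z by (simp add: mult.commute)
  have c0: "c 0 = 1" by (simp add: c_def qpoch_def)
  have c_Suc: "c (Suc j) * (1 - q ^ Suc j) = c j" for j
    using qpoch_nonzero[of q q j] qpoch_factor_nonzero[of q q j] q
    by (simp add: c_def qpoch_Suc field_simps)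
  have s: "(\<lambda>j. c j * z ^ j) sums qexp q z" "(\<lambda>j. c j * (q * z) ^ j) sums qexp q (q * z)"
    using summable_qexp[OF q z] summable_qexp[OF q qz] unfolding qexp_def c_def
    by (simp_all add: summable_sums)
  have "(\<lambda>j. c (Suc j) * z ^ Suc j) sums (qexp q z - 1)"
    using s(1) c0 by (subst sums_Suc_iff) simp
  then have "(\<lambda>j. c (Suc j) * z ^ Suc j - z * (c j * z ^ j)) sums (qexp q z - 1 - z * qexp q z)"
    using s(1) by (intro sums_diff sums_mult)
  moreover have "c (Suc j) * z ^ Suc j - z * (c j * z ^ j) = c (Suc j) * (q * z) ^ Suc j" for j
    by (simp add: c_Suc[of j, symmetric] algebra_simps power_mult_distrib)
  ultimately have "(\<lambda>j. c (Suc j) * (q * z) ^ Suc j) sums (qexp q z - 1 - z * qexp q z)"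
    by simp
  moreover have "(\<lambda>j. c (Suc j) * (q * z) ^ Suc j) sums (qexp q (q * z) - 1)"
    using s(2) c0 by (subst sums_Suc_iff) simp
  ultimately have "qexp q z - 1 - z * qexp q z = qexp q (q * z) - 1"
    by (rule sums_unique2)
  then show ?thesis by (simp add: algebra_simps)
qed

lemma qexp_0: "qexp q 0 = 1"
  unfolding qexp_def using powser_zero[of "\<lambda>j. inverse (qpoch q q j)"]
  by (simp add: qpoch_def)

lemma isCont_qexp_0:
  fixes q :: real assumes "\<bar>q\<bar> < 1"
  shows "isCont (qexp q) 0"
proof -
  have "summable (\<lambda>j. inverse (qpoch q q j) * (1/2) ^ j)"
    using assms by (intro summable_qexp) auto
  from isCont_powser[OF this] show ?thesis
    unfolding qexp_def[abs_def] by simp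
qed

lemma qexp_mult_qpoch:
  fixes q z :: real assumes q: "\<bar>q\<bar> < 1" and z: "\<bar>z\<bar> < 1"
  shows "qexp q z * qpoch z q n = qexp q (q ^ n * z)"
proof (induction n)
  case 0
  then show ?case by (simp add: qpoch_def)
next
  case (Suc n)
  have qnz: "\<bar>q ^ n * z\<bar> < 1"
    using abs_mult_power_le[of q z n] q z by (simp add: mult.commute)
  have "qexp q z * qpoch z q (Suc n) = (1 - q ^ n * z) * qexp q (q ^ n * z)"
    using Suc by (simp add: qpoch_Suc algebra_simps)
  also have "\<dots> = qexp q (q ^ Suc n * z)"
    using qexp_functional_eq[OF q qnz] by (simp add: mult.assoc)
  finally show ?case .
qed

lemma qexp_eq_inverse_qpoch_inf:
  fixes q z :: real assumes q: "\<bar>q\<bar> < 1" and z: "\<bar>z\<bar> < 1"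
  shows "qexp q z = 1 / qpoch_inf z q"
proof -
  have "(\<lambda>n. q ^ n * z) \<longlonglongrightarrow> 0 * z"
    using q by (intro tendsto_intros LIMSEQ_power_zero) auto
  then have "(\<lambda>n. qexp q (q ^ n * z)) \<longlonglongrightarrow> qexp q 0"
    using isCont_qexp_0[OF q] isCont_tendsto_compose by fastforce
  then have "(\<lambda>n. qexp q z * qpoch z q n) \<longlonglongrightarrow> 1"
    by (simp add: qexp_mult_qpoch[OF q z] qexp_0)
  moreover have "(\<lambda>n. qexp q z * qpoch z q n) \<longlonglongrightarrow> qexp q z * qpoch_inf z q"
    by (intro tendsto_intros qpoch_LIMSEQ_qpoch_inf q z)
  ultimately have "qexp q z * qpoch_inf z q = 1"
    using LIMSEQ_unique by blast
  then show ?thesis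
    using qpoch_inf_nonzero[OF q z] by (simp add: field_simps)
qed

lemma euler_sums:
  fixes q z :: real assumes "\<bar>q\<bar> < 1" "\<bar>z\<bar> < 1"
  shows "(\<lambda>j. z ^ j / qpoch q q j) sums (1 / qpoch_inf z q)"
  using summable_sums[OF summable_qexp[OF assms]] qexp_eq_inverse_qpoch_inf[OF assms]
  by (simp add: qexp_def divide_inverse mult.commute)

lemma gen_euler_pmf_0:
  fixes q :: real assumes "\<bar>q\<bar> < 1"
  shows "gen_euler_pmf lam q 0 j = qpoch_inf ((1 - q) * lam) q * ((1 - q) * lam) ^ j / qpoch q q j"
  using qpoch_nonzero[of q q j] assms
  by (simp add: gen_euler_pmf_def normN_def adiff_def wall_def qpoch_def[of _ _ 0]
      binomial_eq_0 power_mult_distrib)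

lemma gen_euler_pgf_0_sums:
  fixes q lam t :: real assumes "\<bar>q\<bar> < 1" and "\<bar>(1 - q) * lam * t\<bar> < 1"
  shows "(\<lambda>j. t ^ j * gen_euler_pmf lam q 0 j) sums
           (qpoch_inf ((1 - q) * lam) q / qpoch_inf ((1 - q) * lam * t) q)"
  using sums_mult[OF euler_sums[OF assms], of "qpoch_inf ((1 - q) * lam) q"] assms(1)
  by (simp add: gen_euler_pmf_0 power_mult_distrib mult_ac)

definition qint :: "real \<Rightarrow> nat \<Rightarrow> real" where
  "qint q n = (\<Sum>l<n. q ^ l)"

definition qfac :: "real \<Rightarrow> nat \<Rightarrow> real" where
  "qfac q n = (\<Prod>i<n. qint q (Suc i))"

lemma one_minus_power_eq_qint: "1 - q ^ n = (1 - q) * qint q n"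
  unfolding qint_def by (rule one_diff_power_eq)

lemma qint_1: "qint 1 n = real n"
  by (simp add: qint_def)

lemma qint_nonneg: "0 \<le> q \<Longrightarrow> 0 \<le> qint q n"
  unfolding qint_def by (simp add: sum_nonneg)

lemma qint_mono: "0 \<le> q \<Longrightarrow> a \<le> b \<Longrightarrow> qint q a \<le> qint q b"
  unfolding qint_def by (intro sum_mono2) auto

lemma qint_ge_1: "0 \<le> q \<Longrightarrow> 1 \<le> n \<Longrightarrow> 1 \<le> qint q n"
  using qint_mono[of q 1 n] by (simp add: qint_def)

lemma qint_le: "0 \<le> q \<Longrightarrow> q \<le> 1 \<Longrightarrow> qint q n \<le> n"
  using sum_mono[of "{..<n}" "\<lambda>l. q ^ l" "\<lambda>_. 1"] by (simp add: qint_def power_le_one)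

lemma qfac_1: "qfac 1 n = fact n"
  by (induction n) (simp_all add: qfac_def qint_1 fact_Suc)

lemma qfac_ge_1: "0 \<le> q \<Longrightarrow> 1 \<le> qfac q n"
  unfolding qfac_def by (intro prod_ge_1) (auto intro: qint_ge_1)

lemma qfac_pos: "0 \<le> q \<Longrightarrow> 0 < qfac q n"
  using qfac_ge_1[of q n] by linarith

lemma qfac_add: "qfac q (d + n) = qfac q d * (\<Prod>i<n. qint q (d + 1 + i))"
  by (induction n) (simp_all add: qfac_def)

lemma qpoch_q_q_eq_qfac: "qpoch q q n = (1 - q) ^ n * qfac q n"
proof -
  have "qpoch q q n = (\<Prod>i<n. (1 - q) * qint q (Suc i))"
    unfolding qpoch_def by (intro prod.cong refl) (simp add: one_minus_power_eq_qint[symmetric])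
  then show ?thesis by (simp add: prod.distrib qfac_def)
qed

lemma qpoch_power_mult_q: "qpoch (q ^ d * q) q k = (1 - q) ^ k * (\<Prod>i<k. qint q (d + 1 + i))"
proof -
  have "qpoch (q ^ d * q) q k = (\<Prod>i<k. (1 - q) * qint q (d + 1 + i))"
    unfolding qpoch_def
    by (intro prod.cong refl) (simp add: one_minus_power_eq_qint[symmetric] power_add)
  then show ?thesis by (simp only: prod.distrib prod_constant card_lessThan)
qed

lemma qpoch_inverse_power:
  fixes q :: real assumes q: "q \<noteq> 0" and k: "k \<le> n"
  shows "qpoch (inverse (q ^ n)) q k = (q - 1) ^ k * (\<Prod>i<k. qint q (n - i) / q ^ (n - i))"
proof -
  have "1 - inverse (q ^ n) * q ^ i = (q - 1) * (qint q (n - i) / q ^ (n - i))" if "i < k" for i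
  proof -
    have "q ^ n = q ^ i * q ^ (n - i)"
      using that k by (simp add: power_add[symmetric])
    then have "1 - inverse (q ^ n) * q ^ i = - (1 - q ^ (n - i)) / q ^ (n - i)"
      using q by (simp add: field_simps)
    then show ?thesis using q by (simp add: one_minus_power_eq_qint field_simps)
  qed
  then have "qpoch (inverse (q ^ n)) q k = (\<Prod>i<k. (q - 1) * (qint q (n - i) / q ^ (n - i)))"
    unfolding qpoch_def by (intro prod.cong) auto
  then show ?thesis by (simp only: prod.distrib prod_constant card_lessThan)
qed

definition wall_qint :: "real \<Rightarrow> nat \<Rightarrow> nat \<Rightarrow> real \<Rightarrow> real" where
  "wall_qint lam n d q = (\<Sum>k\<le>n. (- (q * lam)) ^ k *
      (\<Prod>i<k. qint q (n - i) / q ^ (n - i) / (qint q (d + 1 + i) * qint q (i + 1))))"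

lemma wall_eq_wall_qint:
  fixes q lam :: real assumes q: "0 < q" "q \<noteq> 1"
  shows "wall n ((1 - q) * lam) (q ^ d) q = wall_qint lam n d q"
  unfolding wall_def wall_qint_def
proof (intro sum.cong refl)
  fix k assume "k \<in> {..n}"
  then have k: "k \<le> n" by simp
  have q0: "q \<noteq> 0" using q by simp
  define A where "A = (\<Prod>i<k. qint q (n - i) / q ^ (n - i))"
  define B where "B = (\<Prod>i<k. qint q (d + 1 + i))"
  define C where "C = (\<Prod>i<k. qint q (i + 1))"
  have "B > 0" "C > 0"
    unfolding B_def C_def using q by (auto intro!: prod_pos less_le_trans[OF _ qint_ge_1])
  moreover have "qpoch q q k = (1 - q) ^ k * C"
    by (simp add: qpoch_q_q_eq_qfac qfac_def C_def)
  moreover have "(q - 1) ^ k = (-1) ^ k * (1 - q) ^ k" "(- (q * lam)) ^ k = (-1) ^ k * q ^ k * lam ^ k"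
    by (simp add: power_minus[symmetric]) (subst power_minus, simp add: power_mult_distrib)
  ultimately have "qpoch (inverse (q ^ n)) q k / qpoch (q ^ d * q) q k * (q * ((1 - q) * lam)) ^ k
      / qpoch q q k = (- (q * lam)) ^ k * (A / (B * C))"
    unfolding qpoch_inverse_power[OF q0 k] qpoch_power_mult_q A_def[symmetric] B_def[symmetric]
      power_mult_distrib
    using q by (simp add: field_simps)
  also have "A / (B * C) = (\<Prod>i<k. qint q (n - i) / q ^ (n - i) / (qint q (d + 1 + i) * qint q (i + 1)))"
    unfolding A_def B_def C_def by (simp add: prod_dividef prod.distrib)
  finally show "qpoch (inverse (q ^ n)) q k / qpoch (q ^ d * q) q k * (q * ((1 - q) * lam)) ^ k
      / qpoch q q k = (- (q * lam)) ^ k *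
      (\<Prod>i<k. qint q (n - i) / q ^ (n - i) / (qint q (d + 1 + i) * qint q (i + 1)))" .
qed

(* N * p_j after cancelling the powers of 1 - q; unlike p_j, every factor is continuous at q = 1. *)
definition unnormalized_pmf :: "real \<Rightarrow> nat \<Rightarrow> real \<Rightarrow> nat \<Rightarrow> real" where
  "unnormalized_pmf lam m q j =
     q ^ (2 * (min m j choose 2)) / q ^ (m * j) * lam ^ adiff m j * qfac q (max m j)
     / (qfac q (min m j) * (qfac q (adiff m j))\<^sup>2) * (wall_qint lam (min m j) (adiff m j) q)\<^sup>2"

lemma gen_euler_pmf_eq_unnormalized_pmf:
  fixes q lam :: real assumes q: "0 < q" "q \<noteq> 1"
  shows "gen_euler_pmf lam q m j = unnormalized_pmf lam m q j / normN q m lam"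
proof (cases "normN q m lam = 0")
  case False
  obtain n d where nd: "{m, j} = {n, d + n}" "min m j = n" "max m j = d + n" "adiff m j = d"
  proof (cases "j \<le> m")
    case True
    then show ?thesis by (intro that[of j "m - j"]) (auto simp: adiff_def)
  next
    case False
    then show ?thesis by (intro that[of m "j - m"]) (auto simp: adiff_def)
  qed
  have "qpoch q q j * qpoch q q m = qpoch q q n * qpoch q q (d + n)"
    using nd(1) by (auto simp: doubleton_eq_iff)
  moreover have "qfac q k \<noteq> 0" for k
    using qfac_pos[of q k] q by simp
  ultimately show ?thesis
    using q False unfolding gen_euler_pmf_def unnormalized_pmf_def nd(2-4) wall_eq_wall_qint[OF q]
    by (simp add: qpoch_q_q_eq_qfac field_simps power_add power2_eq_square)
qed (simp add: gen_euler_pmf_def)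

lemma qpoch_exp_bounds:
  fixes a q :: real assumes q: "0 \<le> q" "q \<le> 1" and a: "0 \<le> a" "a \<le> 1/2"
  shows "exp (- (\<Sum>k<n. a * q ^ k) - 2 * (\<Sum>k<n. (a * q ^ k)\<^sup>2)) \<le> qpoch a q n"
    and "qpoch a q n \<le> exp (- (\<Sum>k<n. a * q ^ k))"
proof -
  have x: "0 \<le> a * q ^ k" "a * q ^ k \<le> 1/2" for k
    using a q mult_left_le[of "q ^ k" a] by (simp_all add: power_le_one)
  have "exp (- (a * q ^ k) - 2 * (a * q ^ k)\<^sup>2) \<le> 1 - a * q ^ k" for k
  proof -
    have "0 < 1 - a * q ^ k"
      using x(2)[of k] by linarith
    then show ?thesis
      using ln_one_minus_pos_lower_bound[OF x[of k]] by (metis exp_le_cancel_iff exp_ln)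
  qed
  then have "(\<Prod>k<n. exp (- (a * q ^ k) - 2 * (a * q ^ k)\<^sup>2)) \<le> qpoch a q n"
    unfolding qpoch_def by (intro prod_mono) auto
  then show "exp (- (\<Sum>k<n. a * q ^ k) - 2 * (\<Sum>k<n. (a * q ^ k)\<^sup>2)) \<le> qpoch a q n"
    by (simp add: exp_sum[symmetric] sum_negf sum_subtractf sum_distrib_left)
  have "0 \<le> 1 - a * q ^ k \<and> 1 - a * q ^ k \<le> exp (- (a * q ^ k))" for k
    using x[of k] exp_ge_add_one_self[of "- (a * q ^ k)"] by simp
  then have "qpoch a q n \<le> (\<Prod>k<n. exp (- (a * q ^ k)))"
    unfolding qpoch_def by (intro prod_mono) auto
  then show "qpoch a q n \<le> exp (- (\<Sum>k<n. a * q ^ k))"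
    by (simp add: exp_sum[symmetric] sum_negf)
qed

lemma qpoch_inf_exp_bounds:
  fixes a q :: real assumes q: "0 \<le> q" "q < 1" and a: "0 \<le> a" "a \<le> 1/2"
  shows "exp (- (a / (1 - q)) - 2 * (a\<^sup>2 / (1 - q\<^sup>2))) \<le> qpoch_inf a q"
    and "qpoch_inf a q \<le> exp (- (a / (1 - q)))"
proof -
  have lim: "(\<lambda>n. qpoch a q n) \<longlonglongrightarrow> qpoch_inf a q"
    using q a by (intro qpoch_LIMSEQ_qpoch_inf) auto
  have s1: "(\<lambda>k. a * q ^ k) sums (a / (1 - q))"
    using sums_mult[OF geometric_sums[of q], of a] q by simp
  have "norm (q\<^sup>2) < 1"
    using q by (simp add: power_less_one_iff abs_less_iff)
  then have s2: "(\<lambda>k. (a * q ^ k)\<^sup>2) sums (a\<^sup>2 / (1 - q\<^sup>2))"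
    using sums_mult[OF geometric_sums, of "q\<^sup>2" "a\<^sup>2"]
    by (simp add: power_mult_distrib power_mult[symmetric] mult.commute)
  have "(\<Sum>k<n. a * q ^ k) \<le> a / (1 - q)" "(\<Sum>k<n. (a * q ^ k)\<^sup>2) \<le> a\<^sup>2 / (1 - q\<^sup>2)" for n
    using sum_le_suminf[OF sums_summable[OF s1], of "{..<n}"] sums_unique[OF s1]
      sum_le_suminf[OF sums_summable[OF s2], of "{..<n}"] sums_unique[OF s2] q a by auto
  then have "exp (- (a / (1 - q)) - 2 * (a\<^sup>2 / (1 - q\<^sup>2))) \<le> qpoch a q n" for n
    using qpoch_exp_bounds(1)[of q a n] q a by (smt (verit) exp_le_cancel_iff)
  then show "exp (- (a / (1 - q)) - 2 * (a\<^sup>2 / (1 - q\<^sup>2))) \<le> qpoch_inf a q"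
    by (intro LIMSEQ_le_const[OF lim]) auto
  have "(\<lambda>n. exp (- (\<Sum>k<n. a * q ^ k))) \<longlonglongrightarrow> exp (- (a / (1 - q)))"
    using s1 unfolding sums_def by (intro tendsto_intros)
  then show "qpoch_inf a q \<le> exp (- (a / (1 - q)))"
    using qpoch_exp_bounds(2)[of q a] q a by (intro LIMSEQ_le[OF lim]) auto
qed

lemma eventually_at_left_1_unit_interval: "eventually (\<lambda>q::real. 0 < q \<and> q < 1) (at_left 1)"
  using eventually_at_left_real[of 0 "1::real"] by (auto elim: eventually_mono)

lemma qpoch_inf_tendsto_exp:
  fixes a :: "real \<Rightarrow> real"
  assumes lim: "((\<lambda>q. a q / (1 - q)) \<longlongrightarrow> c) (at_left 1)"
    and nonneg: "eventually (\<lambda>q. 0 \<le> a q) (at_left 1)"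
  shows "((\<lambda>q. qpoch_inf (a q) q) \<longlongrightarrow> exp (- c)) (at_left 1)"
proof -
  define b where "b q = a q / (1 - q)" for q
  have a_eq: "a q = b q * (1 - q)" if "q < 1" for q
    using that by (simp add: b_def)
  have sq: "(a q)\<^sup>2 / (1 - q\<^sup>2) = (b q)\<^sup>2 * (1 - q) / (1 + q)" if "0 < q" "q < 1" for q
  proof -
    have "(a q)\<^sup>2 / (1 - q\<^sup>2) = ((b q)\<^sup>2 * (1 - q)) * (1 - q) / ((1 + q) * (1 - q))"
      using that by (simp add: a_eq power2_eq_square algebra_simps)
    then show ?thesis
      using that by simp
  qed
  have "((\<lambda>q. b q * (1 - q)) \<longlongrightarrow> c * (1 - 1)) (at_left 1)"
    using lim unfolding b_def by (intro tendsto_intros)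
  moreover have "eventually (\<lambda>q. b q * (1 - q) = a q) (at_left 1)"
    using eventually_at_left_1_unit_interval by eventually_elim (simp add: a_eq)
  ultimately have "(a \<longlongrightarrow> 0) (at_left 1)"
    using Lim_transform_eventually by fastforce
  then have "eventually (\<lambda>q. a q < 1/2) (at_left 1)"
    by (rule order_tendstoD(2)) simp
  with nonneg eventually_at_left_1_unit_interval
  have ev: "eventually (\<lambda>q. 0 < q \<and> q < 1 \<and> 0 \<le> a q \<and> a q \<le> 1/2) (at_left 1)"
    by eventually_elim auto
  show ?thesis
  proof (rule tendsto_sandwich)
    show "eventually (\<lambda>q. exp (- b q - 2 * ((b q)\<^sup>2 * (1 - q) / (1 + q))) \<le> qpoch_inf (a q) q)
        (at_left 1)"
    proof (rule eventually_mono[OF ev])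
      fix q assume q: "0 < q \<and> q < 1 \<and> 0 \<le> a q \<and> a q \<le> 1/2"
      then show "exp (- b q - 2 * ((b q)\<^sup>2 * (1 - q) / (1 + q))) \<le> qpoch_inf (a q) q"
        using qpoch_inf_exp_bounds(1)[of q "a q"] sq[of q] by (simp add: b_def)
    qed
    show "eventually (\<lambda>q. qpoch_inf (a q) q \<le> exp (- b q)) (at_left 1)"
      using ev by eventually_elim (use qpoch_inf_exp_bounds(2) b_def in auto)
    have "((\<lambda>q. exp (- b q - 2 * ((b q)\<^sup>2 * (1 - q) / (1 + q))))
        \<longlongrightarrow> exp (- c - 2 * (c\<^sup>2 * (1 - 1) / (1 + 1)))) (at_left 1)"
      using lim unfolding b_def by (intro tendsto_intros) auto
    then show "((\<lambda>q. exp (- b q - 2 * ((b q)\<^sup>2 * (1 - q) / (1 + q)))) \<longlongrightarrow> exp (- c)) (at_left 1)"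
      by simp
    show "((\<lambda>q. exp (- b q)) \<longlongrightarrow> exp (- c)) (at_left 1)"
      using lim unfolding b_def by (intro tendsto_intros)
  qed
qed

lemma inverse_normN_tendsto:
  fixes lam :: real assumes lam: "0 \<le> lam"
  shows "((\<lambda>q. inverse (normN q m lam)) \<longlongrightarrow> exp (- lam)) (at_left 1)"
proof -
  have "((\<lambda>q. lam / q ^ m) \<longlongrightarrow> lam / 1 ^ m) (at_left 1)"
    by (intro tendsto_intros) auto
  moreover have "eventually (\<lambda>q. lam / q ^ m = inverse (q ^ m) * (1 - q) * lam / (1 - q)) (at_left 1)"
    using eventually_at_left_1_unit_interval by eventually_elim (simp add: field_simps)
  ultimately have "((\<lambda>q. inverse (q ^ m) * (1 - q) * lam / (1 - q)) \<longlongrightarrow> lam) (at_left 1)"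
    by (simp add: tendsto_cong)
  moreover have "eventually (\<lambda>q. 0 \<le> inverse (q ^ m) * (1 - q) * lam) (at_left 1)"
    using eventually_at_left_1_unit_interval by eventually_elim (use lam in simp)
  ultimately have "((\<lambda>q. qpoch_inf (inverse (q ^ m) * (1 - q) * lam) q) \<longlongrightarrow> exp (- lam)) (at_left 1)"
    by (rule qpoch_inf_tendsto_exp)
  moreover have "((\<lambda>q. qpoch ((q / q ^ m) * (1 - q) * lam) q m) \<longlongrightarrow> qpoch ((1 / 1 ^ m) * (1 - 1) * lam) 1 m) (at_left 1)"
    unfolding qpoch_def by (intro tendsto_intros) auto
  ultimately have "((\<lambda>q. q ^ m * qpoch_inf (inverse (q ^ m) * (1 - q) * lam) q
      / qpoch ((q / q ^ m) * (1 - q) * lam) q m) \<longlongrightarrow> 1 ^ m * exp (- lam) / 1) (at_left 1)"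
    by (intro tendsto_intros) (auto simp: qpoch_def)
  then show ?thesis
    by (simp add: normN_def)
qed

lemma unnormalized_pmf_tendsto:
  "((\<lambda>q. unnormalized_pmf lam m q j) \<longlongrightarrow> unnormalized_pmf lam m 1 j) (at_left 1)"
proof -
  have "((\<lambda>q. unnormalized_pmf lam m q j) \<longlongrightarrow> unnormalized_pmf lam m 1 j) (at 1)"
    unfolding unnormalized_pmf_def wall_qint_def qfac_def qint_def
    by (intro tendsto_intros) (auto simp: prod_zero_iff)
  then show ?thesis
    by (rule tendsto_within_subset) simp
qed

lemma gen_euler_pmf_tendsto:
  fixes lam :: real assumes "0 \<le> lam"
  shows "((\<lambda>q. gen_euler_pmf lam q m j) \<longlongrightarrow> exp (- lam) * unnormalized_pmf lam m 1 j) (at_left 1)"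
proof -
  have "((\<lambda>q. inverse (normN q m lam) * unnormalized_pmf lam m q j)
      \<longlongrightarrow> exp (- lam) * unnormalized_pmf lam m 1 j) (at_left 1)"
    using assms by (intro tendsto_intros inverse_normN_tendsto unnormalized_pmf_tendsto)
  moreover have "eventually (\<lambda>q. inverse (normN q m lam) * unnormalized_pmf lam m q j
      = gen_euler_pmf lam q m j) (at_left 1)"
    using eventually_at_left_1_unit_interval
    by eventually_elim (simp add: gen_euler_pmf_eq_unnormalized_pmf divide_inverse mult.commute)
  ultimately show ?thesis
    by (rule Lim_transform_eventually)
qed

lemma sums_power_choose_div_fact:
  fixes y :: real
  shows "(\<lambda>i. y ^ i * real (i choose r) / fact i) sums (exp y * y ^ r / fact r)"
proof -
  have e: "(\<lambda>n. y ^ n / fact n) sums exp y"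
    using exp_converges[of y] by (simp add: divide_inverse mult.commute)
  have "(\<lambda>n. y ^ r / fact r * (y ^ n / fact n)) sums (y ^ r / fact r * exp y)"
    by (rule sums_mult[OF e])
  moreover have "y ^ (n + r) * real ((n + r) choose r) / fact (n + r) = y ^ r / fact r * (y ^ n / fact n)" for n
  proof -
    have "real ((n + r) choose r) = fact (n + r) / (fact r * fact n)"
      by (subst binomial_fact) auto
    then show ?thesis by (simp add: power_add field_simps)
  qed
  ultimately have "(\<lambda>n. y ^ (n + r) * real ((n + r) choose r) / fact (n + r)) sums (exp y * y ^ r / fact r)"
    by (simp add: mult.commute)
  then show ?thesis
    by (subst (asm) sums_zero_iff_shift) (auto simp: binomial_eq_0)
qed

lemma sum_choose_power_div_fact_eq:
  fixes y :: real
  shows "(\<Sum>l\<le>e. real (c choose l) * y ^ c / fact c * (y ^ i * real (i choose (e - l)) / fact i))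
      = y ^ (i + c) * real ((i + c) choose c) * real ((i + c) choose e) / fact (i + c)"
proof -
  have v: "real ((c + i) choose e) = (\<Sum>l\<le>e. real (c choose l) * real (i choose (e - l)))"
    by (subst vandermonde[symmetric]) simp
  have b: "real ((i + c) choose c) = fact (i + c) / (fact c * fact i)"
    by (subst binomial_fact) auto
  have "(\<Sum>l\<le>e. real (c choose l) * y ^ c / fact c * (y ^ i * real (i choose (e - l)) / fact i))
      = y ^ c / fact c * y ^ i / fact i * (\<Sum>l\<le>e. real (c choose l) * real (i choose (e - l)))"
    by (simp add: sum_distrib_left mult_ac)
  also have "\<dots> = y ^ (i + c) * real ((i + c) choose c) * real ((i + c) choose e) / fact (i + c)"
    unfolding v[symmetric] b by (simp add: power_add field_simps add.commute)
  finally show ?thesis .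
qed

lemma sums_power_choose_choose_div_fact:
  fixes y :: real
  shows "(\<lambda>j. y ^ j * real (j choose c) * real (j choose e) / fact j) sums
     (exp y * (\<Sum>l\<le>e. real (c choose l) * y ^ (c + e - l) / (fact c * fact (e - l))))"
proof -
  have "(\<lambda>i. \<Sum>l\<le>e. real (c choose l) * y ^ c / fact c * (y ^ i * real (i choose (e - l)) / fact i)) sums
        (\<Sum>l\<le>e. real (c choose l) * y ^ c / fact c * (exp y * y ^ (e - l) / fact (e - l)))"
    by (intro sums_sum sums_mult sums_power_choose_div_fact)
  moreover have "(\<Sum>l\<le>e. real (c choose l) * y ^ c / fact c * (exp y * y ^ (e - l) / fact (e - l)))
     = exp y * (\<Sum>l\<le>e. real (c choose l) * y ^ (c + e - l) / (fact c * fact (e - l)))"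
    unfolding sum_distrib_left
  proof (intro sum.cong refl)
    fix l assume "l \<in> {..e}"
    then have "c + e - l = c + (e - l)"
      by auto
    then show "real (c choose l) * y ^ c / fact c * (exp y * y ^ (e - l) / fact (e - l)) =
         exp y * (real (c choose l) * y ^ (c + e - l) / (fact c * fact (e - l)))"
      by (simp add: power_add)
  qed
  ultimately have "(\<lambda>i. \<Sum>l\<le>e. real (c choose l) * y ^ c / fact c * (y ^ i * real (i choose (e - l)) / fact i))
      sums (exp y * (\<Sum>l\<le>e. real (c choose l) * y ^ (c + e - l) / (fact c * fact (e - l))))"
    by simp
  then have "(\<lambda>i. y ^ (i + c) * real ((i + c) choose c) * real ((i + c) choose e) / fact (i + c)) sums
     (exp y * (\<Sum>l\<le>e. real (c choose l) * y ^ (c + e - l) / (fact c * fact (e - l))))"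
    by (simp only: sum_choose_power_div_fact_eq)
  then show ?thesis
    by (subst (asm) sums_zero_iff_shift) (auto simp: binomial_eq_0)
qed

(* The Laguerre polynomial L_m^(j-m)(lam), in a form that also makes sense for j < m. *)
definition laguerre_gen :: "real \<Rightarrow> nat \<Rightarrow> nat \<Rightarrow> real" where
  "laguerre_gen lam m j = (\<Sum>a\<le>m. real (j choose (m - a)) * (-lam) ^ a / fact a)"

(* Both sides of sums_laguerre_gen_sq expand into the triple sum over a, b, k of these terms. *)
definition laguerre_sq_term :: "real \<Rightarrow> real \<Rightarrow> nat \<Rightarrow> nat \<Rightarrow> nat \<Rightarrow> nat \<Rightarrow> real" where
  "laguerre_sq_term lam y m a b k =
     (if a \<le> k \<and> b \<le> k then (-lam) ^ a * (-lam) ^ b * y ^ (m + k - a - b) /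
        (fact (m - k) * fact a * fact (k - a) * fact b * fact (k - b)) else 0)"

lemma sum_laguerre_sq_term_k:
  fixes lam y :: real assumes a: "a \<le> m" and b: "b \<le> m"
  shows "(-lam) ^ a * (-lam) ^ b / (fact a * fact b) *
     (\<Sum>l\<le>m - b. real ((m - a) choose l) * y ^ ((m - a) + (m - b) - l) / (fact (m - a) * fact (m - b - l)))
     = (\<Sum>k\<le>m. laguerre_sq_term lam y m a b k)"
proof -
  define h where "h l = real ((m - a) choose l) * y ^ ((m - a) + (m - b) - l) / (fact (m - a) * fact (m - b - l))" for l
  have "(\<Sum>l\<le>m - b. h l) = (\<Sum>k\<in>{b..m}. h (m - k))"
    by (rule sum.reindex_bij_witness[where i="\<lambda>k. m - k" and j="\<lambda>l. m - l"]) (use b in auto)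
  also have "\<dots> = (\<Sum>k\<le>m. if b \<le> k then h (m - k) else 0)"
    by (simp add: sum.If_cases Int_def atLeastAtMost_def atLeast_def atMost_def conj_commute)
  finally have reindex: "(\<Sum>l\<le>m - b. h l) = (\<Sum>k\<le>m. if b \<le> k then h (m - k) else 0)" .
  have "(-lam) ^ a * (-lam) ^ b / (fact a * fact b) * (if b \<le> k then h (m - k) else 0)
      = laguerre_sq_term lam y m a b k" if k: "k \<le> m" for k
  proof (cases "a \<le> k \<and> b \<le> k")
    case True
    then obtain u w v where u: "k = a + u" and w: "k = b + w" and v: "m = k + v"
      using k le_Suc_ex by metis
    then have e: "m - a = u + v" "m - b = w + v" "m - k = v" "m - b - (m - k) = w"
      "(m - a) + (m - b) - (m - k) = u + v + w" "m + k - a - b = u + v + w" "k - a = u" "k - b = w"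
      by auto
    have "real ((u + v) choose v) = fact (u + v) / (fact v * fact u)"
      by (subst binomial_fact) auto
    then show ?thesis
      using True unfolding laguerre_sq_term_def h_def e by (simp add: field_simps)
  next
    case False
    then have "\<not> b \<le> k \<or> (m - a) choose (m - k) = 0"
      using k a by (auto intro: binomial_eq_0)
    then show ?thesis
      using False by (auto simp: laguerre_sq_term_def h_def)
  qed
  then show ?thesis
    unfolding h_def[symmetric] reindex sum_distrib_left by (intro sum.cong) auto
qed

lemma sum_laguerre_sq_term_ab:
  fixes lam y :: real assumes k: "k \<le> m"
  shows "real (m choose k) * y ^ (m - k) * (y - lam) ^ (2 * k) / fact k / fact m
     = (\<Sum>a\<le>m. \<Sum>b\<le>m. laguerre_sq_term lam y m a b k)"
proof -
  define g where "g a = real (k choose a) * (-lam) ^ a * y ^ (k - a)" for a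
  have "(y - lam) ^ (2 * k) = (\<Sum>a\<le>k. g a) * (\<Sum>b\<le>k. g b)"
    using binomial_ring[of "-lam" y k] by (simp add: g_def mult_2 power_add)
  then have "real (m choose k) * y ^ (m - k) * (y - lam) ^ (2 * k) / fact k / fact m
      = (\<Sum>a\<le>k. \<Sum>b\<le>k. real (m choose k) * y ^ (m - k) / fact k / fact m * (g a * g b))"
    by (simp add: sum_product sum_distrib_left sum_divide_distrib mult_ac)
  also have "\<dots> = (\<Sum>a\<le>k. \<Sum>b\<le>k. laguerre_sq_term lam y m a b k)"
  proof (intro sum.cong refl)
    fix a b assume a: "a \<in> {..k}" and b: "b \<in> {..k}"
    obtain u w v where u: "k = a + u" and w: "k = b + w" and v: "m = k + v"
      using a b k le_Suc_ex by (metis atMost_iff)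
    then have e: "m - k = v" "m + k - a - b = u + v + w" "k - a = u" "k - b = w"
      by auto
    have "real (m choose k) = fact m / (fact k * fact (m - k))"
      "real (k choose a) = fact k / (fact a * fact (k - a))"
      "real (k choose b) = fact k / (fact b * fact (k - b))"
      using a b k by (simp_all add: binomial_fact)
    note binomials = this[unfolded e]
    have powers: "y ^ (u + v + w) = y ^ v * y ^ u * y ^ w"
      by (simp add: power_add mult_ac)
    show "real (m choose k) * y ^ (m - k) / fact k / fact m * (g a * g b)
        = laguerre_sq_term lam y m a b k"
      using a b unfolding laguerre_sq_term_def g_def e binomials powers by (simp add: field_simps)
  qed
  also have "\<dots> = (\<Sum>a\<le>m. \<Sum>b\<le>m. laguerre_sq_term lam y m a b k)"
    using k by (intro sum.mono_neutral_cong_left) (auto simp: laguerre_sq_term_def)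
  finally show ?thesis .
qed

lemma laguerre_gen_sq_eq:
  fixes lam y :: real
  shows "y ^ j * (laguerre_gen lam m j)\<^sup>2 / fact j = (\<Sum>a\<le>m. \<Sum>b\<le>m.
      (-lam) ^ a * (-lam) ^ b / (fact a * fact b) * (y ^ j * real (j choose (m - a)) * real (j choose (m - b)) / fact j))"
proof -
  have sq: "(laguerre_gen lam m j)\<^sup>2 = (\<Sum>a\<le>m. \<Sum>b\<le>m.
      (real (j choose (m - a)) * (-lam) ^ a / fact a) * (real (j choose (m - b)) * (-lam) ^ b / fact b))"
    unfolding laguerre_gen_def power2_eq_square by (rule sum_product)
  have "y ^ j * (laguerre_gen lam m j)\<^sup>2 / fact j = y ^ j / fact j * (laguerre_gen lam m j)\<^sup>2"
    by simp
  also have "\<dots> = (\<Sum>a\<le>m. \<Sum>b\<le>m. y ^ j / fact j *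
      ((real (j choose (m - a)) * (-lam) ^ a / fact a) * (real (j choose (m - b)) * (-lam) ^ b / fact b)))"
    unfolding sq sum_distrib_left ..
  finally show ?thesis
    by (simp only:) (intro sum.cong refl, simp add: mult_ac)
qed

lemma sum_laguerre_sq_coeff_eq:
  fixes lam y :: real
  shows "(\<Sum>a\<le>m. \<Sum>b\<le>m. (-lam) ^ a * (-lam) ^ b / (fact a * fact b) * (exp y *
      (\<Sum>l\<le>m - b. real ((m - a) choose l) * y ^ ((m - a) + (m - b) - l) / (fact (m - a) * fact (m - b - l)))))
    = exp y / fact m * (\<Sum>k\<le>m. real (m choose k) * y ^ (m - k) * (y - lam) ^ (2 * k) / fact k)"
proof -
  have "(\<Sum>a\<le>m. \<Sum>b\<le>m. (-lam) ^ a * (-lam) ^ b / (fact a * fact b) * (exp y *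
      (\<Sum>l\<le>m - b. real ((m - a) choose l) * y ^ ((m - a) + (m - b) - l) / (fact (m - a) * fact (m - b - l)))))
    = (\<Sum>a\<le>m. \<Sum>b\<le>m. exp y * (\<Sum>k\<le>m. laguerre_sq_term lam y m a b k))"
    by (intro sum.cong refl, subst mult.left_commute) (simp only: sum_laguerre_sq_term_k atMost_iff)
  also have "\<dots> = exp y * (\<Sum>a\<le>m. \<Sum>b\<le>m. \<Sum>k\<le>m. laguerre_sq_term lam y m a b k)"
    by (simp add: sum_distrib_left)
  also have "(\<Sum>a\<le>m. \<Sum>b\<le>m. \<Sum>k\<le>m. laguerre_sq_term lam y m a b k)
      = (\<Sum>k\<le>m. \<Sum>a\<le>m. \<Sum>b\<le>m. laguerre_sq_term lam y m a b k)"
    by (subst sum.swap, rule sum.cong[OF refl], rule sum.swap)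
  also have "\<dots> = (\<Sum>k\<le>m. real (m choose k) * y ^ (m - k) * (y - lam) ^ (2 * k) / fact k / fact m)"
    by (intro sum.cong refl) (simp only: sum_laguerre_sq_term_ab atMost_iff)
  also have "\<dots> = (\<Sum>k\<le>m. real (m choose k) * y ^ (m - k) * (y - lam) ^ (2 * k) / fact k) / fact m"
    by (rule sum_divide_distrib[symmetric])
  finally show ?thesis
    by simp
qed

lemma sums_laguerre_gen_sq:
  fixes lam y :: real
  shows "(\<lambda>j. y ^ j * (laguerre_gen lam m j)\<^sup>2 / fact j) sums
     (exp y / fact m * (\<Sum>k\<le>m. real (m choose k) * y ^ (m - k) * (y - lam) ^ (2 * k) / fact k))"
  unfolding laguerre_gen_sq_eq sum_laguerre_sq_coeff_eq[symmetric]
  by (intro sums_sum sums_mult sums_power_choose_choose_div_fact)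

lemma prod_lessThan_diff: "k \<le> n \<Longrightarrow> (\<Prod>i<k. real (n - i)) = fact n / fact (n - k)"
proof (induction k)
  case (Suc k)
  then obtain r where r: "n - k = Suc r"
    by (metis Suc_diff_Suc Suc_le_lessD)
  have "(\<Prod>i<Suc k. real (n - i)) = fact n / fact (n - k) * real (n - k)"
    using Suc by simp
  also have "\<dots> = fact n / (real (Suc r) * fact r) * real (Suc r)"
    unfolding r fact_Suc by simp
  also have "\<dots> = fact n / fact (n - Suc k)"
    using r by (simp del: of_nat_Suc add: diff_Suc split: nat.split)
  finally show ?case .
qed simp

lemma prod_lessThan_add_Suc: "(\<Prod>i<k. real (d + 1 + i)) = fact (d + k) / fact d"
proof (induction k)
  case (Suc k)
  have "fact (d + Suc k) = real (d + 1 + k) * fact (d + k)"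
    using fact_Suc[of "d + k"] by simp
  then show ?case
    using Suc by simp
qed simp

lemma prod_lessThan_Suc: "(\<Prod>i<k. real (i + 1)) = fact k"
  by (induction k) (simp_all add: fact_Suc field_simps)

lemma wall_qint_1:
  "wall_qint lam n d 1 = fact n * fact d / fact (d + n) * laguerre_gen lam n (d + n)"
  unfolding wall_qint_def laguerre_gen_def sum_distrib_left
proof (intro sum.cong refl)
  fix k assume "k \<in> {..n}"
  then have k: "k \<le> n" by simp
  have "(\<Prod>i<k. qint 1 (n - i) / 1 ^ (n - i) / (qint 1 (d + 1 + i) * qint 1 (i + 1)))
      = (\<Prod>i<k. real (n - i)) / ((\<Prod>i<k. real (d + 1 + i)) * (\<Prod>i<k. real (i + 1)))"
    by (simp add: qint_1 prod_dividef prod.distrib)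
  also have "\<dots> = fact n * fact d / (fact (n - k) * fact (d + k) * fact k)"
    unfolding prod_lessThan_diff[OF k] prod_lessThan_add_Suc prod_lessThan_Suc by (simp add: field_simps)
  finally have prod: "(\<Prod>i<k. qint 1 (n - i) / 1 ^ (n - i) / (qint 1 (d + 1 + i) * qint 1 (i + 1)))
      = fact n * fact d / (fact (n - k) * fact (d + k) * fact k)" .
  have binomial: "real ((d + n) choose (n - k)) = fact (d + n) / (fact (n - k) * fact (d + k))"
    using k by (simp add: binomial_fact)
  show "(- (1 * lam)) ^ k * (\<Prod>i<k. qint 1 (n - i) / 1 ^ (n - i) / (qint 1 (d + 1 + i) * qint 1 (i + 1)))
      = fact n * fact d / fact (d + n) * (real ((d + n) choose (n - k)) * (- lam) ^ k / fact k)"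
    unfolding prod binomial by (simp add: field_simps)
qed

lemma laguerre_gen_reflect:
  assumes "j \<le> m"
  shows "laguerre_gen lam m j = (-lam) ^ (m - j) * fact j / fact m * laguerre_gen lam j m"
proof -
  define d where "d = m - j"
  then have m: "m = j + d"
    using assms by simp
  define f where "f a = real (j choose (m - a)) * (-lam) ^ a / fact a" for a
  have "laguerre_gen lam m j = (\<Sum>a\<in>{d..m}. f a)"
    unfolding laguerre_gen_def f_def[symmetric]
    by (rule sum.mono_neutral_right) (auto simp: f_def m binomial_eq_0)
  also have "\<dots> = (\<Sum>k\<le>j. f (k + d))"
    using sum.shift_bounds_cl_nat_ivl[of f 0 d j] by (simp add: m atLeast0AtMost add.commute)
  also have "\<dots> = (-lam) ^ d * fact j / fact m * laguerre_gen lam j m"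
    unfolding laguerre_gen_def sum_distrib_left
  proof (intro sum.cong refl)
    fix k assume "k \<in> {..j}"
    then have k: "k \<le> j" by simp
    have binomials: "real (j choose (j - k)) = fact j / (fact (j - k) * fact k)"
      "real (m choose (j - k)) = fact m / (fact (j - k) * fact (d + k))"
      using k by (simp_all add: binomial_fact m)
    have shift: "m - (k + d) = j - k"
      by (simp add: m)
    show "f (k + d) = (-lam) ^ d * fact j / fact m * (real (m choose (j - k)) * (-lam) ^ k / fact k)"
      unfolding f_def shift binomials by (simp add: field_simps power_add add.commute)
  qed
  finally show ?thesis
    by (simp add: d_def)
qed

lemma unnormalized_pmf_1:
  "unnormalized_pmf lam m 1 j * lam ^ m = fact m * lam ^ j * (laguerre_gen lam m j)\<^sup>2 / fact j"
proof (cases "m \<le> j")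
  case True
  define d where "d = j - m"
  then have j: "j = d + m"
    using True by simp
  then have "min m j = m" "max m j = d + m" "adiff m j = d"
    by (auto simp: adiff_def)
  then show ?thesis
    unfolding unnormalized_pmf_def wall_qint_1 qfac_1 j
    by (simp add: power_add field_simps power2_eq_square)
next
  case False
  define d where "d = m - j"
  then have m: "m = d + j"
    using False by simp
  have e: "min (d + j) j = j" "max (d + j) j = d + j" "adiff (d + j) j = d"
    by (auto simp: adiff_def)
  have "(laguerre_gen lam (d + j) j)\<^sup>2
      = (lam ^ d * fact j / fact (d + j))\<^sup>2 * (laguerre_gen lam j (d + j))\<^sup>2"
    using laguerre_gen_reflect[of j "d + j" lam]
    by (simp add: power_mult_distrib power_divide power_mult[symmetric] mult.commute[of 2])
  then show ?thesis
    unfolding m unnormalized_pmf_def e wall_qint_1 qfac_1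
    by (simp add: power_add field_simps power2_eq_square)
qed

lemma power_mult_square_power_eq:
  fixes lam t :: real assumes lam: "lam \<noteq> 0" and t: "t \<noteq> 0" and k: "k \<le> m"
  shows "(lam * t) ^ (m - k) * (lam * t - lam) ^ (2 * k) / lam ^ m
    = t ^ m * (- (lam * (2 - (t + 1 / t)))) ^ k"
proof -
  obtain r where m: "m = k + r"
    using k le_Suc_ex by blast
  have mk: "m - k = r"
    using m by simp
  have a: "- (lam * (2 - (t + 1 / t))) = lam * (t - 1)\<^sup>2 / t"
    using t by (simp add: field_simps power2_eq_square)
  have "lam * t - lam = lam * (t - 1)"
    by (simp add: algebra_simps)
  then have "(lam * t - lam) ^ (2 * k) = ((lam * (t - 1))\<^sup>2) ^ k"
    by (simp only: power_mult)
  then have b: "(lam * t - lam) ^ (2 * k) = lam ^ k * lam ^ k * ((t - 1)\<^sup>2) ^ k"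
    by (simp add: power_mult_distrib power2_eq_square)
  show ?thesis
    unfolding mk a b unfolding m using lam t
    by (simp add: power_add power_mult_distrib power_divide field_simps)
qed

lemma sums_limit_pgf:
  fixes lam t :: real assumes lam: "lam \<noteq> 0" and t: "t \<noteq> 0"
  shows "(\<lambda>j. t ^ j * (exp (- lam) * unnormalized_pmf lam m 1 j)) sums
     (t ^ m * exp (lam * (t - 1)) * laguerre0 m (lam * (2 - (t + 1 / t))))"
proof -
  define C where "C = exp (- lam) * fact m / lam ^ m"
  define S where "S = (\<Sum>k\<le>m. real (m choose k) * (lam * t) ^ (m - k) * (lam * t - lam) ^ (2 * k) / fact k)"
  have "(\<lambda>j. C * ((lam * t) ^ j * (laguerre_gen lam m j)\<^sup>2 / fact j)) sums (C * (exp (lam * t) / fact m * S))"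
    unfolding S_def by (intro sums_mult sums_laguerre_gen_sq)
  moreover have "C * ((lam * t) ^ j * (laguerre_gen lam m j)\<^sup>2 / fact j)
      = t ^ j * (exp (- lam) * unnormalized_pmf lam m 1 j)" for j
  proof -
    have "unnormalized_pmf lam m 1 j = fact m * lam ^ j * (laguerre_gen lam m j)\<^sup>2 / fact j / lam ^ m"
      using unnormalized_pmf_1[of lam m j] lam by (simp add: field_simps)
    then show ?thesis
      unfolding C_def using lam by (simp add: field_simps power_mult_distrib)
  qed
  moreover have "C * (exp (lam * t) / fact m * S)
      = t ^ m * exp (lam * (t - 1)) * laguerre0 m (lam * (2 - (t + 1 / t)))"
  proof -
    have exp: "exp (- lam) * exp (lam * t) = exp (lam * (t - 1))"
      by (simp add: exp_add[symmetric] algebra_simps)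
    have "C * (exp (lam * t) / fact m * S) = exp (- lam) * exp (lam * t) *
        (\<Sum>k\<le>m. real (m choose k) * ((lam * t) ^ (m - k) * (lam * t - lam) ^ (2 * k) / lam ^ m) / fact k)"
      unfolding C_def S_def sum_distrib_left by (intro sum.cong refl) (simp add: field_simps)
    also have "\<dots> = exp (lam * (t - 1)) *
        (\<Sum>k\<le>m. real (m choose k) * (t ^ m * (- (lam * (2 - (t + 1 / t)))) ^ k) / fact k)"
      unfolding exp using lam t
      by (intro arg_cong2[where f = "(*)"] refl sum.cong) (simp_all add: power_mult_square_power_eq)
    also have "\<dots> = t ^ m * exp (lam * (t - 1)) * laguerre0 m (lam * (2 - (t + 1 / t)))"
      unfolding laguerre0_def sum_distrib_left by (intro sum.cong refl) (simp add: field_simps)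
    finally show ?thesis .
  qed
  ultimately show ?thesis
    by simp
qed

lemma qint_ge_half:
  fixes q :: real assumes q: "0 \<le> q" "q \<le> 1" and h: "1/2 \<le> q ^ n0" and i: "n0 \<le> i"
  shows "real n0 / 2 \<le> qint q i"
proof -
  have "(\<Sum>l<n0. 1/2) \<le> (\<Sum>l<n0. q ^ l)"
    using order_trans[OF h power_decreasing[of _ n0 q]] q by (intro sum_mono) auto
  then have "real n0 / 2 \<le> qint q n0"
    by (simp add: qint_def)
  also have "\<dots> \<le> qint q i"
    using q i by (intro qint_mono) auto
  finally show ?thesis .
qed

lemma qfac_ge_power:
  fixes q B :: real
  assumes q: "0 \<le> q" and Bq: "\<And>i. n0 \<le> i \<Longrightarrow> B \<le> qint q i" and B: "1 \<le> B"
  shows "B ^ d / B ^ n0 \<le> qfac q d"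
proof (induction d)
  case 0
  then show ?case
    using B q by (simp add: qfac_def one_le_power)
next
  case (Suc d)
  show ?case
  proof (cases "Suc d \<le> n0")
    case True
    then have "B ^ Suc d / B ^ n0 \<le> 1"
      using B power_increasing[of "Suc d" n0 B] by simp
    also have "1 \<le> qfac q (Suc d)"
      using q by (rule qfac_ge_1)
    finally show ?thesis .
  next
    case False
    have "B ^ Suc d / B ^ n0 = (B ^ d / B ^ n0) * B"
      by (simp add: field_simps)
    also have "\<dots> \<le> qfac q d * qint q (Suc d)"
      using Suc Bq[of "Suc d"] False B q by (intro mult_mono) (auto intro: qfac_pos less_imp_le)
    also have "\<dots> = qfac q (Suc d)"
      by (simp add: qfac_def)
    finally show ?thesis .
  qed
qed

lemma power_div_qfac_le:
  fixes q B lam :: real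
  assumes q: "0 \<le> q" and Bq: "\<And>i. n0 \<le> i \<Longrightarrow> B \<le> qint q i" and B: "1 \<le> B" and lam: "0 \<le> lam"
  shows "lam ^ d / qfac q d \<le> B ^ n0 * (lam / B) ^ d"
proof -
  have "0 < B ^ d / B ^ n0"
    using B by simp
  then have "lam ^ d / qfac q d \<le> lam ^ d / (B ^ d / B ^ n0)"
    using qfac_ge_power[of q n0 B d, OF q Bq B] lam
    by (intro divide_left_mono mult_pos_pos) (auto intro: qfac_pos q)
  also have "\<dots> = B ^ n0 * (lam / B) ^ d"
    using B by (simp add: power_divide)
  finally show ?thesis .
qed

lemma qbinomial_le:
  fixes q :: real assumes q: "0 \<le> q" "q \<le> 1"
  shows "qfac q (d + n) / (qfac q d * qfac q n) \<le> real (d + n) ^ n"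
proof -
  have "qfac q (d + n) / (qfac q d * qfac q n) = (\<Prod>i<n. qint q (d + 1 + i)) / qfac q n"
    using qfac_pos[OF q(1), of d] qfac_pos[OF q(1), of n]
    by (simp add: qfac_add del: prod_pos)
  also have "\<dots> \<le> (\<Prod>i<n. qint q (d + 1 + i))"
  proof (rule mult_imp_div_pos_le)
    have "0 \<le> (\<Prod>i<n. qint q (d + 1 + i))"
      using q by (auto intro!: prod_nonneg qint_nonneg)
    then show "(\<Prod>i<n. qint q (d + 1 + i)) \<le> (\<Prod>i<n. qint q (d + 1 + i)) * qfac q n"
      using mult_left_mono[OF qfac_ge_1[OF q(1), of n]] by simp
  qed (rule qfac_pos[OF q(1)])
  also have "\<dots> \<le> (\<Prod>i<n. real (d + n))"
  proof (intro prod_mono conjI)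
    fix i assume "i \<in> {..<n}"
    then show "qint q (d + 1 + i) \<le> real (d + n)"
      using qint_le[OF q, of "d + 1 + i"] by simp
  qed (use q qint_nonneg in auto)
  finally show ?thesis
    by simp
qed

lemma abs_wall_qint_factor_le:
  fixes q :: real assumes q: "0 < q" "q \<le> 1" and hm: "1/2 \<le> q ^ m" and n: "n \<le> m"
  shows "\<bar>qint q (n - i) / q ^ (n - i) / (qint q (d + 1 + i) * qint q (i + 1))\<bar> \<le> 2 * m"
proof -
  have factors: "1 \<le> qint q (d + 1 + i)" "1 \<le> qint q (i + 1)"
    using q by (simp_all add: qint_ge_1)
  then have denom: "1 \<le> qint q (d + 1 + i) * qint q (i + 1)"
    using mult_mono[of 1 "qint q (d + 1 + i)" 1 "qint q (i + 1)"] by simp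
  have num: "0 \<le> qint q (n - i)" "qint q (n - i) \<le> m"
    using q qint_le[of q "n - i"] n by (auto intro: qint_nonneg)
  have "q ^ m \<le> q ^ (n - i)"
    using q n by (intro power_decreasing) auto
  then have inv: "1 / q ^ (n - i) \<le> 2"
    using hm q by (simp add: field_simps)
  have "\<bar>qint q (n - i) / q ^ (n - i) / (qint q (d + 1 + i) * qint q (i + 1))\<bar>
      = qint q (n - i) * (1 / q ^ (n - i)) / (qint q (d + 1 + i) * qint q (i + 1))"
    using num factors q by (simp add: abs_mult abs_divide)
  also have "\<dots> \<le> qint q (n - i) * (1 / q ^ (n - i)) / 1"
    using num denom q by (intro divide_left_mono) auto
  also have "\<dots> \<le> real m * 2"
    using num inv q by (simp only: div_by_1, intro mult_mono) auto
  finally show ?thesis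
    by simp
qed

lemma abs_wall_qint_le:
  fixes q lam :: real
  assumes q: "0 < q" "q \<le> 1" and hm: "1/2 \<le> q ^ m" and n: "n \<le> m" and lam: "0 \<le> lam"
  shows "\<bar>wall_qint lam n d q\<bar> \<le> (\<Sum>k\<le>m. (2 * lam * m) ^ k)"
proof -
  have "\<bar>wall_qint lam n d q\<bar> \<le> (\<Sum>k\<le>n. \<bar>(- (q * lam)) ^ k *
      (\<Prod>i<k. qint q (n - i) / q ^ (n - i) / (qint q (d + 1 + i) * qint q (i + 1)))\<bar>)"
    unfolding wall_qint_def by (rule sum_abs)
  also have "\<dots> \<le> (\<Sum>k\<le>n. (2 * lam * m) ^ k)"
  proof (intro sum_mono)
    fix k
    have "\<bar>(- (q * lam)) ^ k * (\<Prod>i<k. qint q (n - i) / q ^ (n - i) / (qint q (d + 1 + i) * qint q (i + 1)))\<bar>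
        = q ^ k * lam ^ k * (\<Prod>i<k. \<bar>qint q (n - i) / q ^ (n - i) / (qint q (d + 1 + i) * qint q (i + 1))\<bar>)"
      using q lam by (simp add: abs_mult power_abs abs_prod power_mult_distrib)
    also have "\<dots> \<le> 1 * lam ^ k * (\<Prod>i<k. 2 * real m)"
      using q lam abs_wall_qint_factor_le[OF q hm n]
      by (intro mult_mono prod_mono) (auto simp: power_le_one prod_nonneg)
    also have "\<dots> = (2 * lam * m) ^ k"
      by (simp add: power_mult_distrib)
    finally show "\<bar>(- (q * lam)) ^ k * (\<Prod>i<k. qint q (n - i) / q ^ (n - i)
        / (qint q (d + 1 + i) * qint q (i + 1)))\<bar> \<le> (2 * lam * m) ^ k" .
  qed
  also have "\<dots> \<le> (\<Sum>k\<le>m. (2 * lam * m) ^ k)"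
    using n lam by (intro sum_mono2) auto
  finally show ?thesis .
qed

lemma power_le_fact_mult_exp:
  fixes x :: real assumes "0 \<le> x"
  shows "x ^ m \<le> fact m * exp x"
proof -
  have s: "(\<lambda>n. x ^ n / fact n) sums exp x"
    using exp_converges[of x] by (simp add: divide_inverse mult.commute)
  have "x ^ m / fact m = (\<Sum>n\<in>{m}. x ^ n / fact n)"
    by simp
  also have "\<dots> \<le> exp x"
    unfolding sums_unique[OF s] using assms by (intro sum_le_suminf[OF sums_summable[OF s]]) auto
  finally show ?thesis
    by (simp add: field_simps)
qed

lemma power_adiff_le:
  fixes x :: real assumes "0 < x" "x \<le> 1"
  shows "x ^ adiff m j \<le> x ^ j / x ^ m"
proof (cases "m \<le> j")
  case True
  then show ?thesis
    using assms by (simp add: adiff_def power_diff)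
next
  case False
  then have "x ^ adiff m j \<le> 1" "1 \<le> x ^ j / x ^ m"
    using assms by (simp_all add: adiff_def power_le_one power_diff[symmetric] le_divide_eq
        power_decreasing)
  then show ?thesis
    by linarith
qed

lemma unnormalized_pmf_nonneg:
  fixes q lam :: real assumes "0 \<le> q" "0 \<le> lam"
  shows "0 \<le> unnormalized_pmf lam m q j"
  unfolding unnormalized_pmf_def using assms qfac_pos[of q]
  by (intro mult_nonneg_nonneg divide_nonneg_nonneg) (auto intro: less_imp_le)

lemma power_div_power_mult_le:
  fixes q :: real assumes q: "0 < q" "q \<le> 1" and hm: "1/2 \<le> q ^ m"
  shows "q ^ k / q ^ (m * j) \<le> 2 ^ j"
proof -
  have "(1/2) ^ j \<le> (q ^ m) ^ j"
    using hm by (intro power_mono) auto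
  then have "(1/2) ^ j \<le> q ^ (m * j)"
    by (simp add: power_mult)
  then have "q ^ k / q ^ (m * j) \<le> 1 / (1/2) ^ j"
    using q by (intro frac_le) (auto simp: power_le_one)
  then show ?thesis
    by (simp add: power_one_over)
qed

lemma power_adiff_div_qfac_le:
  fixes q B lam :: real
  assumes q: "0 \<le> q" and Bq: "\<And>i. n0 \<le> i \<Longrightarrow> B \<le> qint q i" and B: "1 \<le> B"
    and lam: "0 < lam" "lam \<le> B"
  shows "lam ^ adiff m j / qfac q (adiff m j) \<le> B ^ n0 * ((lam / B) ^ j / (lam / B) ^ m)"
proof -
  have "lam ^ adiff m j / qfac q (adiff m j) \<le> B ^ n0 * (lam / B) ^ adiff m j"
    using q lam by (intro power_div_qfac_le Bq B) auto
  also have "\<dots> \<le> B ^ n0 * ((lam / B) ^ j / (lam / B) ^ m)"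
    using B lam by (intro mult_left_mono power_adiff_le) auto
  finally show ?thesis .
qed

lemma qfac_max_div_le:
  fixes q :: real assumes "0 \<le> q" "q \<le> 1"
  shows "qfac q (max m j) / (qfac q (adiff m j) * qfac q (min m j)) \<le> real (j + m) ^ m"
proof -
  have max: "max m j = adiff m j + min m j"
    by (simp add: adiff_def)
  have "qfac q (max m j) / (qfac q (adiff m j) * qfac q (min m j)) \<le> real (max m j) ^ min m j"
    unfolding max using assms by (rule qbinomial_le)
  also have "\<dots> \<le> real (j + m) ^ min m j"
    by (intro power_mono) auto
  also have "\<dots> \<le> real (j + m) ^ m"
    by (cases "j + m = 0") (auto intro: power_increasing)
  finally show ?thesis .
qed

lemma unnormalized_pmf_le:
  fixes q lam B :: real
  assumes q: "0 < q" "q \<le> 1" and hn: "1/2 \<le> q ^ n0" and mn: "m \<le> n0"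
    and Bq: "\<And>i. n0 \<le> i \<Longrightarrow> B \<le> qint q i" and B: "1 \<le> B" and lam: "0 < lam" "lam \<le> B"
  shows "unnormalized_pmf lam m q j
    \<le> 2 ^ j * (B ^ n0 * ((lam / B) ^ j / (lam / B) ^ m)) * real (j + m) ^ m * (\<Sum>k\<le>m. (2 * lam * m) ^ k)\<^sup>2"
proof -
  define n where "n = min m j"
  define d where "d = adiff m j"
  have "q ^ n0 \<le> q ^ m"
    using mn q by (intro power_decreasing) auto
  then have hm: "1/2 \<le> q ^ m"
    using hn by linarith
  have "\<bar>wall_qint lam n d q\<bar> \<le> (\<Sum>k\<le>m. (2 * lam * m) ^ k)"
    using q hm lam by (intro abs_wall_qint_le) (auto simp: n_def)
  then have W: "(wall_qint lam n d q)\<^sup>2 \<le> (\<Sum>k\<le>m. (2 * lam * m) ^ k)\<^sup>2"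
    by (metis abs_ge_zero power2_abs power_mono)
  have "q ^ (2 * (n choose 2)) / q ^ (m * j) \<le> 2 ^ j"
    by (rule power_div_power_mult_le[OF q hm])
  moreover have "lam ^ d / qfac q d \<le> B ^ n0 * ((lam / B) ^ j / (lam / B) ^ m)"
    unfolding d_def using q by (intro power_adiff_div_qfac_le[OF _ Bq B lam]) simp
  moreover have "qfac q (max m j) / (qfac q d * qfac q n) \<le> real (j + m) ^ m"
    unfolding n_def d_def using q by (intro qfac_max_div_le) simp_all
  ultimately have F: "q ^ (2 * (n choose 2)) / q ^ (m * j) \<le> 2 ^ j"
    "lam ^ d / qfac q d \<le> B ^ n0 * ((lam / B) ^ j / (lam / B) ^ m)"
    "qfac q (max m j) / (qfac q d * qfac q n) \<le> real (j + m) ^ m"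
    by blast+
  have "unnormalized_pmf lam m q j = q ^ (2 * (n choose 2)) / q ^ (m * j) * (lam ^ d / qfac q d)
      * (qfac q (max m j) / (qfac q d * qfac q n)) * (wall_qint lam n d q)\<^sup>2"
    unfolding unnormalized_pmf_def n_def[symmetric] d_def[symmetric]
    by (simp add: power2_eq_square)
  also have "\<dots> \<le> 2 ^ j * (B ^ n0 * ((lam / B) ^ j / (lam / B) ^ m)) * real (j + m) ^ m
      * (\<Sum>k\<le>m. (2 * lam * m) ^ k)\<^sup>2"
    using F W q lam B qfac_pos[of q]
    by (intro mult_mono mult_nonneg_nonneg divide_nonneg_nonneg) (auto intro: less_imp_le)
  finally show ?thesis .
qed

lemma unnormalized_pmf_le_geometric:
  fixes q lam B :: real
  assumes q: "0 < q" "q \<le> 1" and hn: "1/2 \<le> q ^ n0" and mn: "m \<le> n0"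
    and Bq: "\<And>i. n0 \<le> i \<Longrightarrow> B \<le> qint q i" and B: "1 \<le> B" and lam: "0 < lam" "lam \<le> B"
  shows "unnormalized_pmf lam m q j \<le> B ^ n0 / (lam / B) ^ m * fact m * exp (real m)
    * (\<Sum>k\<le>m. (2 * lam * m) ^ k)\<^sup>2 * (2 * exp 1 * lam / B) ^ j"
proof -
  define C where "C = (\<Sum>k\<le>m. (2 * lam * m) ^ k)\<^sup>2"
  have "unnormalized_pmf lam m q j
      \<le> 2 ^ j * (B ^ n0 * ((lam / B) ^ j / (lam / B) ^ m)) * real (j + m) ^ m * C"
    unfolding C_def by (rule unnormalized_pmf_le[OF q hn mn Bq B lam])
  also have "\<dots> \<le> 2 ^ j * (B ^ n0 * ((lam / B) ^ j / (lam / B) ^ m)) * (fact m * exp (real (j + m))) * C"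
    using power_le_fact_mult_exp[of "real (j + m)" m] B lam
    by (intro mult_left_mono mult_right_mono) (auto simp: C_def)
  also have "exp (real (j + m)) = exp 1 ^ j * exp (real m)"
    using exp_of_nat_mult[of j 1] by (simp add: exp_add)
  also have "2 ^ j * (B ^ n0 * ((lam / B) ^ j / (lam / B) ^ m)) * (fact m * (exp 1 ^ j * exp (real m))) * C
      = B ^ n0 / (lam / B) ^ m * fact m * exp (real m) * C * (2 * exp 1 * lam / B) ^ j"
    using B lam by (simp add: power_mult_distrib power_divide field_simps)
  finally show ?thesis
    unfolding C_def .
qed

lemma unnormalized_pmf_geometric_bound:
  fixes lam :: real assumes lam: "0 < lam"
  obtains K rho where "0 \<le> rho" "rho < 1"
    "eventually (\<lambda>q. \<forall>j. 0 \<le> unnormalized_pmf lam m q j \<and> unnormalized_pmf lam m q j \<le> K * rho ^ j)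
       (at_left 1)"
proof -
  define n0 where "n0 = nat \<lceil>4 * exp 1 * lam\<rceil> + m + 2"
  define B where "B = real n0 / 2"
  define rho where "rho = 2 * exp 1 * lam / B"
  define K where "K = B ^ n0 / (lam / B) ^ m * fact m * exp (real m) * (\<Sum>k\<le>m. (2 * lam * m) ^ k)\<^sup>2"
  have n0: "m \<le> n0" "4 * exp 1 * lam + 2 \<le> real n0"
    unfolding n0_def by linarith+
  have "lam \<le> exp 1 * lam"
    using lam by simp
  then have B: "1 \<le> B" "lam \<le> B" "2 * exp 1 * lam < B"
    using n0 lam unfolding B_def by linarith+
  then have rho: "0 \<le> rho" "rho < 1"
    using lam unfolding rho_def by auto
  have "((\<lambda>q::real. q ^ n0) \<longlongrightarrow> 1 ^ n0) (at_left 1)"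
    by (intro tendsto_intros)
  then have "eventually (\<lambda>q::real. 1/2 < q ^ n0) (at_left 1)"
    by (rule order_tendstoD) simp
  then have "eventually (\<lambda>q. \<forall>j. 0 \<le> unnormalized_pmf lam m q j \<and> unnormalized_pmf lam m q j \<le> K * rho ^ j)
      (at_left 1)"
    using eventually_at_left_1_unit_interval
  proof eventually_elim
    case (elim q)
    then have q: "0 < q" "q \<le> 1" and hn: "1/2 \<le> q ^ n0"
      by auto
    have Bq: "B \<le> qint q i" if "n0 \<le> i" for i
      unfolding B_def using q hn that by (intro qint_ge_half) auto
    show ?case
      using unnormalized_pmf_le_geometric[OF q hn n0(1) Bq B(1) lam B(2)] unnormalized_pmf_nonneg[of q lam] q lam
      unfolding K_def rho_def by simp
  qed
  with rho that show ?thesis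
    by blast
qed

lemma gen_euler_pmf_geometric_bound:
  fixes lam t :: real assumes lam: "0 < lam" and t: "\<bar>t\<bar> \<le> 1"
  obtains M rho where "0 \<le> rho" "rho < 1"
    "eventually (\<lambda>q. \<forall>j. norm (t ^ j * gen_euler_pmf lam q m j) \<le> M * rho ^ j) (at_left 1)"
proof -
  obtain K rho where rho: "0 \<le> rho" "rho < 1" and bound:
    "eventually (\<lambda>q. \<forall>j. 0 \<le> unnormalized_pmf lam m q j \<and> unnormalized_pmf lam m q j \<le> K * rho ^ j)
       (at_left 1)"
    using unnormalized_pmf_geometric_bound[OF lam] by blast
  define E where "E = exp (- lam) + 1"
  have "0 \<le> E"
    unfolding E_def by (simp add: add_nonneg_nonneg)
  have lim_N: "((\<lambda>q. inverse (normN q m lam)) \<longlongrightarrow> exp (- lam)) (at_left 1)"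
    using lam by (intro inverse_normN_tendsto) simp
  have "eventually (\<lambda>q. 0 < inverse (normN q m lam)) (at_left 1)"
    by (rule order_tendstoD(1)[OF lim_N]) simp
  moreover have "eventually (\<lambda>q. inverse (normN q m lam) < E) (at_left 1)"
    unfolding E_def by (rule order_tendstoD(2)[OF lim_N]) simp
  ultimately have "eventually (\<lambda>q. \<forall>j. norm (t ^ j * gen_euler_pmf lam q m j) \<le> E * K * rho ^ j) (at_left 1)"
    using bound eventually_at_left_1_unit_interval
  proof eventually_elim
    case (elim q)
    show ?case
    proof
      fix j
      have "norm (t ^ j * gen_euler_pmf lam q m j) = \<bar>t\<bar> ^ j * (inverse (normN q m lam) * unnormalized_pmf lam m q j)"
        using elim by (simp add: gen_euler_pmf_eq_unnormalized_pmf abs_mult power_abs divide_inverse mult.commute)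
      also have "\<dots> \<le> 1 * (E * (K * rho ^ j))"
        using elim t \<open>0 \<le> E\<close> by (intro mult_mono) (auto simp: power_le_one less_imp_le)
      finally show "norm (t ^ j * gen_euler_pmf lam q m j) \<le> E * K * rho ^ j"
        by (simp add: mult_ac)
    qed
  qed
  with rho that show ?thesis
    by blast
qed

lemma gen_euler_pgf_tendsto:
  fixes lam t :: real assumes lam: "0 < lam" and t: "t \<noteq> 0" "\<bar>t\<bar> \<le> 1"
  shows "((\<lambda>q. gen_euler_pgf lam q m t) \<longlongrightarrow>
      t ^ m * exp (lam * (t - 1)) * laguerre0 m (lam * (2 - (t + 1 / t)))) (at_left 1)"
proof -
  obtain M rho where rho: "0 \<le> rho" "rho < 1"
    and bound: "eventually (\<lambda>q. \<forall>j. norm (t ^ j * gen_euler_pmf lam q m j) \<le> M * rho ^ j) (at_left 1)"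
    using gen_euler_pmf_geometric_bound[OF lam t(2)] by blast
  have "eventually (\<lambda>(j, q). norm (t ^ j * gen_euler_pmf lam q m j) \<le> M * rho ^ j)
      (at_top \<times>\<^sub>F at_left 1)"
    using bound unfolding eventually_prod_filter
    by (intro exI[of _ "\<lambda>_. True"] exI[of _ "\<lambda>q. \<forall>j. norm (t ^ j * gen_euler_pmf lam q m j) \<le> M * rho ^ j"])
      auto
  moreover have "summable (\<lambda>j. M * rho ^ j)"
    using rho by (intro summable_mult summable_geometric) auto
  moreover have "((\<lambda>q. t ^ j * gen_euler_pmf lam q m j) \<longlongrightarrow> t ^ j * (exp (- lam) * unnormalized_pmf lam m 1 j))
      (at_left 1)" for j
    using lam by (intro tendsto_intros gen_euler_pmf_tendsto) simp
  ultimately have "((\<lambda>q. \<Sum>j. t ^ j * gen_euler_pmf lam q m j)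
      \<longlongrightarrow> (\<Sum>j. t ^ j * (exp (- lam) * unnormalized_pmf lam m 1 j))) (at_left 1)"
    using tannerys_theorem[where a = "\<lambda>j q. t ^ j * gen_euler_pmf lam q m j"] by simp
  then show ?thesis
    unfolding gen_euler_pgf_def using sums_unique[OF sums_limit_pgf, of lam t m] lam t by simp
qed

theorem mainTheorem2:
  shows "(\<forall>(q::real) (lam::real) (t::real).
            0 < q \<and> q < 1 \<and> 0 < lam \<and> lam < q ^ 0 / (1 - q) \<and> \<bar>t\<bar> \<le> 1 \<longrightarrow>
            (\<lambda>j. t ^ j * gen_euler_pmf lam q 0 j) sums
              (qpoch_inf ((1 - q) * lam) q / qpoch_inf ((1 - q) * lam * t) q))
       \<and> (\<forall>(m::nat) (lam::real) (t::real).
            m \<noteq> 0 \<and> 0 < lam \<and> 0 < \<bar>t\<bar> \<and> \<bar>t\<bar> \<le> 1 \<longrightarrow>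
            ((\<lambda>q. gen_euler_pgf lam q m t) \<longlongrightarrow>
               t ^ m * exp (lam * (t - 1)) * laguerre0 m (lam * (2 - (t + 1 / t)))) (at_left 1))"
proof (intro conjI allI impI)
  fix q lam t :: real
  assume h: "0 < q \<and> q < 1 \<and> 0 < lam \<and> lam < q ^ 0 / (1 - q) \<and> \<bar>t\<bar> \<le> 1"
  then have "(1 - q) * lam * \<bar>t\<bar> \<le> (1 - q) * lam"
    by (intro mult_left_le) auto
  moreover have "(1 - q) * lam < 1"
    using h by (simp add: less_divide_eq mult.commute)
  moreover have "\<bar>(1 - q) * lam * t\<bar> = (1 - q) * lam * \<bar>t\<bar>"
    using h by (simp add: abs_mult)
  ultimately have "\<bar>(1 - q) * lam * t\<bar> < 1"
    by linarith
  then show "(\<lambda>j. t ^ j * gen_euler_pmf lam q 0 j) sums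
      (qpoch_inf ((1 - q) * lam) q / qpoch_inf ((1 - q) * lam * t) q)"
    using h by (intro gen_euler_pgf_0_sums) auto
next
  fix m :: nat and lam t :: real
  assume "m \<noteq> 0 \<and> 0 < lam \<and> 0 < \<bar>t\<bar> \<and> \<bar>t\<bar> \<le> 1"
  then show "((\<lambda>q. gen_euler_pgf lam q m t) \<longlongrightarrow>
      t ^ m * exp (lam * (t - 1)) * laguerre0 m (lam * (2 - (t + 1 / t)))) (at_left 1)"
    by (intro gen_euler_pgf_tendsto) auto
qed

end
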